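(* For every bounded distributive lattice $L$, the set of prime ideals of $\Phi(L)$ is $$\mathcal{I}_p(\Phi(L))=\{(I\times I)\cap \Phi(L): I\in \mathcal{I}_p(L)\}\cup\{(I\times L)\cap\Phi(L): I\in\mathcal{I}_p(L)\}.$$
   Context: All lattices are bounded distributive with $0\neq 1$. For a lattice $L$, $\Phi(L)=\{(a,b)\in L\times L : a\le b\}$, ordered coordinatewise; it is a $(0,1)$-sublattice of $L\times L$. $\mathcal{I}_p(L)$ denotes the set of prime ideals of $L$ (ideals $I\neq L$ such that $a,b\notin I$ implies $a\wedge b\notin I$). *)

theory Defs
  imports Main "HOL-Library.Product_Order"
begin

text \<open>Ideals and prime ideals of a sublattice S (carrier set) of a lattice type.
  For the whole lattice take S = UNIV.\<close>

definition lat_ideal :: "'a::lattice set \<Rightarrow> 'a set \<Rightarrow> bool" where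
  "lat_ideal S I \<longleftrightarrow> I \<subseteq> S \<and> I \<noteq> {} \<and>
     (\<forall>a\<in>I. \<forall>b\<in>S. b \<le> a \<longrightarrow> b \<in> I) \<and>
     (\<forall>a\<in>I. \<forall>b\<in>I. sup a b \<in> I)"

definition prime_ideals :: "'a::lattice set \<Rightarrow> 'a set set" where
  "prime_ideals S = {I. lat_ideal S I \<and> I \<noteq> S \<and>
     (\<forall>a\<in>S. \<forall>b\<in>S. a \<notin> I \<longrightarrow> b \<notin> I \<longrightarrow> inf a b \<notin> I)}"

definition Phi :: "'a::order set \<Rightarrow> ('a \<times> 'a) set" where
  "Phi L = {(a, b). a \<in> L \<and> b \<in> L \<and> a \<le> b}"

end

theory Submission
  imports Defs
begin

text \<open>
  The key general fact is that the preimage of a prime ideal under a lattice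
  homomorphism is again prime, as long as it is nonempty and proper.  It is used
  three times: for the diagonal \<open>x \<mapsto> (x, x)\<close> from L into \<open>\<Phi>(L)\<close>, and for the
  two projections \<open>fst\<close>, \<open>snd\<close> from \<open>\<Phi>(L)\<close> onto L.

  Given a prime ideal P of \<open>\<Phi>(L)\<close>, its diagonal \<open>I = {x. (x, x) \<in> P}\<close> is prime in L.
  If \<open>(\<bottom>, \<top>) \<in> P\<close> then \<open>(a, b) \<in> P\<close> iff \<open>a \<in> I\<close>, because \<open>(a, b) \<le> (a, a) \<squnion> (\<bottom>, \<top>)\<close>.
  Otherwise \<open>(a, b) \<in> P\<close> iff \<open>b \<in> I\<close>, because \<open>(\<bottom>, b) = (b, b) \<sqinter> (\<bottom>, \<top>)\<close> and P is prime.
  Conversely, \<open>(I \<times> UNIV) \<inter> \<Phi>(L)\<close> and \<open>(I \<times> I) \<inter> \<Phi>(L)\<close> are the preimages of I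
  under \<open>fst\<close> and \<open>snd\<close>, hence prime.

  None of these arguments uses distributivity or \<open>\<bottom> \<noteq> \<top>\<close>, so the lemmas are
  stated for arbitrary bounded lattices.
\<close>

lemma Phi_UNIV_iff [simp]: "(a, b) \<in> Phi UNIV \<longleftrightarrow> a \<le> b"
  by (simp add: Phi_def)

lemma prime_idealsD:
  assumes "I \<in> prime_ideals S"
  shows "I \<subseteq> S" "I \<noteq> {}" "I \<noteq> S"
    and "\<And>a b. a \<in> I \<Longrightarrow> b \<in> S \<Longrightarrow> b \<le> a \<Longrightarrow> b \<in> I"
    and "\<And>a b. a \<in> I \<Longrightarrow> b \<in> I \<Longrightarrow> sup a b \<in> I"
    and "\<And>a b. a \<in> S \<Longrightarrow> b \<in> S \<Longrightarrow> a \<notin> I \<Longrightarrow> b \<notin> I \<Longrightarrow> inf a b \<notin> I"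
  using assms unfolding prime_ideals_def lat_ideal_def by simp_all

lemma prime_ideal_contains_least:
  assumes "I \<in> prime_ideals S" "z \<in> S" "\<And>x. x \<in> S \<Longrightarrow> z \<le> x"
  shows "z \<in> I"
  using prime_idealsD[OF assms(1)] assms(2,3) by blast

lemma prime_ideal_misses_greatest:
  assumes "I \<in> prime_ideals S" "t \<in> S" "\<And>x. x \<in> S \<Longrightarrow> x \<le> t"
  shows "t \<notin> I"
  using prime_idealsD[OF assms(1)] assms(2,3) by blast

lemma prime_ideal_preimage:
  fixes f :: "'a::lattice \<Rightarrow> 'b::lattice"
  assumes maps: "f ` S \<subseteq> T"
    and sup_closed: "\<And>a b. a \<in> S \<Longrightarrow> b \<in> S \<Longrightarrow> sup a b \<in> S"
    and hom_sup: "\<And>a b. a \<in> S \<Longrightarrow> b \<in> S \<Longrightarrow> f (sup a b) = sup (f a) (f b)"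
    and hom_inf: "\<And>a b. a \<in> S \<Longrightarrow> b \<in> S \<Longrightarrow> f (inf a b) = inf (f a) (f b)"
    and I: "I \<in> prime_ideals T"
    and inside: "z \<in> S" "f z \<in> I"
    and outside: "t \<in> S" "f t \<notin> I"
  shows "{x \<in> S. f x \<in> I} \<in> prime_ideals S"
proof -
  have mono: "f b \<le> f a" if "a \<in> S" "b \<in> S" "b \<le> a" for a b
    using hom_sup[OF that(2,1)] that(3) by (simp add: sup_absorb2 le_iff_sup)
  note down = prime_idealsD(4)[OF I] and sup = prime_idealsD(5)[OF I]
    and prime = prime_idealsD(6)[OF I]
  let ?J = "{x \<in> S. f x \<in> I}"
  have "\<forall>a\<in>?J. \<forall>b\<in>S. b \<le> a \<longrightarrow> b \<in> ?J"
    using maps mono down by blast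
  moreover have "\<forall>a\<in>?J. \<forall>b\<in>?J. sup a b \<in> ?J"
    using sup_closed hom_sup sup by simp
  moreover have "\<forall>a\<in>S. \<forall>b\<in>S. a \<notin> ?J \<longrightarrow> b \<notin> ?J \<longrightarrow> inf a b \<notin> ?J"
    using maps hom_inf prime by (simp add: image_subset_iff)
  moreover have "?J \<noteq> {}" "?J \<noteq> S" using inside outside by auto
  ultimately show ?thesis unfolding prime_ideals_def lat_ideal_def by blast
qed

lemma Phi_sup_closed:
  fixes p q :: "'a::lattice \<times> 'a"
  assumes "p \<in> Phi UNIV" "q \<in> Phi UNIV"
  shows "sup p q \<in> Phi UNIV"
  using assms by (cases p, cases q) (auto intro: le_supI1 le_supI2)

lemma Phi_bounds:
  fixes p :: "'a::bounded_lattice \<times> 'a"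
  assumes "p \<in> Phi UNIV"
  shows "(bot, bot) \<le> p" "p \<le> (top, top)"
  using assms by (cases p; simp)+

lemma diagonal_prime:
  fixes P :: "('a::bounded_lattice \<times> 'a) set"
  assumes P: "P \<in> prime_ideals (Phi UNIV)"
  shows "{x. (x, x) \<in> P} \<in> prime_ideals UNIV"
proof -
  have "(bot, bot) \<in> P"
    by (rule prime_ideal_contains_least[OF P]) (simp_all add: Phi_bounds)
  moreover have "(top, top) \<notin> P"
    by (rule prime_ideal_misses_greatest[OF P]) (simp_all add: Phi_bounds)
  ultimately have "{x \<in> UNIV. (x, x) \<in> P} \<in> prime_ideals UNIV"
    by (intro prime_ideal_preimage[where f = "\<lambda>x. (x, x)" and z = bot and t = top, OF _ _ _ _ P])
      auto
  then show ?thesis by simp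
qed

lemma pair_set_eqI: "(\<And>a b. (a, b) \<in> A \<longleftrightarrow> (a, b) \<in> B) \<Longrightarrow> A = B"
  by auto

lemma prime_ideal_Phi_with_bot_top:
  fixes P :: "('a::bounded_lattice \<times> 'a) set"
  assumes P: "P \<in> prime_ideals (Phi UNIV)" and bot_top: "(bot, top) \<in> P"
  shows "P = ({x. (x, x) \<in> P} \<times> UNIV) \<inter> Phi UNIV"
proof (rule pair_set_eqI)
  note sub = prime_idealsD(1)[OF P] and down = prime_idealsD(4)[OF P]
    and sup = prime_idealsD(5)[OF P]
  fix a b :: 'a
  show "(a, b) \<in> P \<longleftrightarrow> (a, b) \<in> ({x. (x, x) \<in> P} \<times> UNIV) \<inter> Phi UNIV"
  proof
    assume ab: "(a, b) \<in> P"
    then have "a \<le> b" using sub by auto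
    moreover have "(a, a) \<in> P" using down[OF ab] \<open>a \<le> b\<close> by simp
    ultimately show "(a, b) \<in> ({x. (x, x) \<in> P} \<times> UNIV) \<inter> Phi UNIV" by simp
  next
    assume "(a, b) \<in> ({x. (x, x) \<in> P} \<times> UNIV) \<inter> Phi UNIV"
    then have ab: "a \<le> b" and aa: "(a, a) \<in> P" by simp_all
    have "sup (a, a) (bot, top) \<in> P" using sup[OF aa bot_top] .
    then have "(a, top) \<in> P" by simp
    then show "(a, b) \<in> P" using down[of "(a, top)" "(a, b)"] ab by simp
  qed
qed

lemma prime_ideal_Phi_without_bot_top:
  fixes P :: "('a::bounded_lattice \<times> 'a) set"
  assumes P: "P \<in> prime_ideals (Phi UNIV)" and bot_top: "(bot, top) \<notin> P"
  shows "P = ({x. (x, x) \<in> P} \<times> {x. (x, x) \<in> P}) \<inter> Phi UNIV"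
proof (rule pair_set_eqI)
  note sub = prime_idealsD(1)[OF P] and down = prime_idealsD(4)[OF P]
    and prime = prime_idealsD(6)[OF P]
  fix a b :: 'a
  show "(a, b) \<in> P \<longleftrightarrow> (a, b) \<in> ({x. (x, x) \<in> P} \<times> {x. (x, x) \<in> P}) \<inter> Phi UNIV"
  proof
    assume ab: "(a, b) \<in> P"
    then have "a \<le> b" using sub by auto
    then have "(a, a) \<in> P" "(bot, b) \<in> P" using down[OF ab] by simp_all
    moreover have "inf (b, b) (bot, top) = (bot, b)" by simp
    ultimately have "(b, b) \<in> P" using prime[of "(b, b)" "(bot, top)"] bot_top by force
    with \<open>a \<le> b\<close> \<open>(a, a) \<in> P\<close>
    show "(a, b) \<in> ({x. (x, x) \<in> P} \<times> {x. (x, x) \<in> P}) \<inter> Phi UNIV" by simp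
  next
    assume "(a, b) \<in> ({x. (x, x) \<in> P} \<times> {x. (x, x) \<in> P}) \<inter> Phi UNIV"
    then show "(a, b) \<in> P" using down[of "(b, b)" "(a, b)"] by simp
  qed
qed

text \<open>Both product-shaped sets built from a prime ideal of L are prime in \<open>\<Phi>(L)\<close>:
  they are the preimages of the ideal under the two projections.\<close>

lemma prime_ideal_Phi_from_prime:
  fixes I :: "'a::bounded_lattice set"
  assumes I: "I \<in> prime_ideals UNIV"
  shows "(I \<times> UNIV) \<inter> Phi UNIV \<in> prime_ideals (Phi UNIV)"
    and "(I \<times> I) \<inter> Phi UNIV \<in> prime_ideals (Phi UNIV)"
proof -
  have bot: "bot \<in> I" and top: "top \<notin> I"
    using prime_ideal_contains_least[OF I] prime_ideal_misses_greatest[OF I] by auto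
  have "{p \<in> Phi UNIV. fst p \<in> I} \<in> prime_ideals (Phi UNIV)"
    "{p \<in> Phi UNIV. snd p \<in> I} \<in> prime_ideals (Phi UNIV)"
    using bot top
    by (intro prime_ideal_preimage[where z = "(bot, bot)" and t = "(top, top)",
          OF _ Phi_sup_closed _ _ I]; simp)+
  moreover have "(I \<times> UNIV) \<inter> Phi UNIV = {p \<in> Phi UNIV. fst p \<in> I}" by auto
  moreover have "(I \<times> I) \<inter> Phi UNIV = {p \<in> Phi UNIV. snd p \<in> I}"
    using prime_idealsD(4)[OF I] by auto
  ultimately show "(I \<times> UNIV) \<inter> Phi UNIV \<in> prime_ideals (Phi UNIV)"
    and "(I \<times> I) \<inter> Phi UNIV \<in> prime_ideals (Phi UNIV)" by simp_all
qed

theorem mainTheorem4: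
  assumes "(bot :: 'a :: {bounded_lattice, distrib_lattice}) \<noteq> top"
  shows "prime_ideals (Phi (UNIV :: 'a set)) =
     {(I \<times> I) \<inter> Phi UNIV | I. I \<in> prime_ideals (UNIV :: 'a set)} \<union>
     {(I \<times> UNIV) \<inter> Phi UNIV | I. I \<in> prime_ideals (UNIV :: 'a set)}"
proof (intro equalityI subsetI)
  fix P :: "('a \<times> 'a) set"
  assume P: "P \<in> prime_ideals (Phi UNIV)"
  then have diag: "{x. (x, x) \<in> P} \<in> prime_ideals UNIV" by (rule diagonal_prime)
  show "P \<in> {(I \<times> I) \<inter> Phi UNIV | I. I \<in> prime_ideals UNIV} \<union>
      {(I \<times> UNIV) \<inter> Phi UNIV | I. I \<in> prime_ideals UNIV}"
  proof (cases "(bot, top) \<in> P")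
    case True
    then show ?thesis using prime_ideal_Phi_with_bot_top[OF P] diag by blast
  next
    case False
    then show ?thesis using prime_ideal_Phi_without_bot_top[OF P] diag by blast
  qed
next
  fix P :: "('a \<times> 'a) set"
  assume "P \<in> {(I \<times> I) \<inter> Phi UNIV | I. I \<in> prime_ideals UNIV} \<union>
      {(I \<times> UNIV) \<inter> Phi UNIV | I. I \<in> prime_ideals UNIV}"
  then show "P \<in> prime_ideals (Phi UNIV)" using prime_ideal_Phi_from_prime by blast
qed

end
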